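(* Let $N$ and $n$ be positive integers with $N \le n$, and let $\pi \in S_n$ be a permutation of $\{1,2,\dots,n\}$ such that every cycle of $\pi$ (in its disjoint cycle decomposition, fixed points counted as $1$-cycles) contains at most one element $i$ with $i > N$. Write the cycle type of $\pi$ as a partition $\lambda = (\lambda_1,\dots,\lambda_m,1,\dots,1) \vdash n$, where $\lambda_1 \ge \lambda_2 \ge \dots \ge \lambda_m > 1$ are the lengths of the cycles of $\pi$ of length greater than $1$, and the remaining parts equal to $1$ correspond to the fixed points of $\pi$. Then \[ \sum_{i=1}^{m} \lambda_i \le m + N. \]
   Context: In the paper's setting, $N$ is the number of keywords in a keyword query $q=\{k_1,\dots,k_N\}$ and $n=|V_D|$ is the size of the vocabulary of a relational database $D$ (the set of its relation names, attributes and attribute domains). A configuration of $q$ on $D$ (an injective map from keywords to database terms) is identified with a permutation $\pi\in S_{|V_D|}$ in which each cycle contains at most one element of value bigger than $N$; the claim concerns such permutations. The cycle type of a permutation is the partition of $n$ formed by the lengths of its cycles listed in weakly decreasing order. *)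

theory Defs
  imports "HOL-Combinatorics.Permutations" "HOL-Combinatorics.Orbits" "HOL-Library.Multiset"
begin

definition cycles_of :: "(nat \<Rightarrow> nat) \<Rightarrow> nat \<Rightarrow> nat set set" where
  "cycles_of pi n = (\<lambda>x. orbit pi x) ` {1..n}"

definition cycle_type :: "(nat \<Rightarrow> nat) \<Rightarrow> nat \<Rightarrow> nat multiset" where
  "cycle_type pi n = image_mset card (mset_set (cycles_of pi n))"

end

theory Submission
  imports Defs
begin

text \<open>Each nontrivial cycle has at most one point above N, so its length exceeds by at most one the
  number of its points in {1..N}. The cycles are disjoint, so these points are distinct for different
  cycles and there are at most N of them altogether.\<close>

lemma sum_card_le_card_add_card_outside:
  assumes "finite F" and "finite A" and "pairwise disjnt F"
    and "\<And>c. c \<in> F \<Longrightarrow> card (c - A) \<le> 1"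
  shows "(\<Sum>c\<in>F. card c) \<le> card F + card A"
proof -
  have card_le: "card c \<le> 1 + card (c \<inter> A)" if "c \<in> F" for c
  proof (cases "finite c")
    case True
    then have "card c = card (c - A) + card (c \<inter> A)"
      by (simp add: card_Int_Diff[of c A])
    with assms(4)[OF that] show ?thesis by linarith
  qed simp
  have "(\<Sum>c\<in>F. card c) \<le> (\<Sum>c\<in>F. 1 + card (c \<inter> A))"
    by (rule sum_mono) (rule card_le)
  also have "\<dots> = card F + (\<Sum>c\<in>F. card (c \<inter> A))"
    by (subst sum.distrib) simp
  also have "(\<Sum>c\<in>F. card (c \<inter> A)) = card (\<Union>c\<in>F. c \<inter> A)"
    using assms(1-3) by (intro card_UN_disjoint[symmetric]) (auto simp: pairwise_def disjnt_def)
  also have "\<dots> \<le> card A"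
    using assms(2) by (intro card_mono) auto
  finally show ?thesis by simp
qed

lemma orbit_eq_if_orbits_meet:
  assumes "permutation f" and "orbit f x \<inter> orbit f y \<noteq> {}"
  shows "orbit f x = orbit f y"
proof -
  note orbit_of_member = orbit_cyclic_eq3[OF cyclic_on_orbit'[OF assms(1)]]
  obtain z where "z \<in> orbit f x" "z \<in> orbit f y"
    using assms(2) by blast
  have "orbit f x = orbit f z"
    using \<open>z \<in> orbit f x\<close> by (rule orbit_of_member[symmetric])
  also have "\<dots> = orbit f y"
    using \<open>z \<in> orbit f y\<close> by (rule orbit_of_member)
  finally show ?thesis .
qed

lemma pairwise_disjnt_cycles_of:
  assumes "pi permutes {1..n}"
  shows "pairwise disjnt (cycles_of pi n)"
proof (rule pairwiseI)
  have "permutation pi"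
    using assms by (auto simp: permutation_permutes)
  fix c d
  assume "c \<in> cycles_of pi n" "d \<in> cycles_of pi n" "c \<noteq> d"
  then obtain x y where c: "c = orbit pi x" and d: "d = orbit pi y"
    unfolding cycles_of_def by blast
  show "disjnt c d"
    using orbit_eq_if_orbits_meet[OF \<open>permutation pi\<close>, of x y] \<open>c \<noteq> d\<close>
    unfolding c d disjnt_def by blast
qed

lemma cycles_of_subset:
  assumes "pi permutes {1..n}" and "c \<in> cycles_of pi n"
  shows "c \<subseteq> {1..n}"
proof -
  obtain x where "x \<in> {1..n}" and "c = orbit pi x"
    using assms(2) unfolding cycles_of_def by blast
  then show ?thesis
    using permutes_orbit_subset[OF assms(1)] by simp
qed

lemma filter_cycle_type:
  "filter_mset P (cycle_type pi n) = image_mset card (mset_set {c \<in> cycles_of pi n. P (card c)})"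
proof -
  have "finite (cycles_of pi n)"
    by (simp add: cycles_of_def)
  then show ?thesis
    by (simp add: cycle_type_def image_mset_filter_mset_swap[symmetric] filter_mset_mset_set)
qed

theorem mainTheorem1:
  fixes N n :: nat and pi :: "nat \<Rightarrow> nat"
  assumes "0 < N" and "N \<le> n"
    and "pi permutes {1..n}"
    and "\<forall>c \<in> cycles_of pi n. card {i \<in> c. N < i} \<le> 1"
  shows "sum_mset (filter_mset (\<lambda>l. 1 < l) (cycle_type pi n))
           \<le> size (filter_mset (\<lambda>l. 1 < l) (cycle_type pi n)) + N"
proof -
  define S where "S = {c \<in> cycles_of pi n. 1 < card c}"
  have "finite S"
    by (simp add: S_def cycles_of_def)
  moreover have "pairwise disjnt S"
    using pairwise_disjnt_cycles_of[OF assms(3)] by (simp add: S_def pairwise_def)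
  moreover have "card (c - {1..N}) \<le> 1" if "c \<in> S" for c
  proof -
    have "c - {1..N} = {i \<in> c. N < i}"
      using cycles_of_subset[OF assms(3)] that by (fastforce simp: S_def)
    then show ?thesis
      using assms(4) that by (simp add: S_def)
  qed
  ultimately have "(\<Sum>c\<in>S. card c) \<le> card S + N"
    using sum_card_le_card_add_card_outside[of S "{1..N}"] by simp
  moreover have "filter_mset (\<lambda>l. 1 < l) (cycle_type pi n) = image_mset card (mset_set S)"
    by (simp only: filter_cycle_type S_def)
  ultimately show ?thesis
    by (simp only: sum_unfold_sum_mset[symmetric] size_image_mset size_mset_set)
qed

end
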